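(* Let $n\ge2$, let $\Theta$ be a positive random variable with density and Laplace transform $f_\Theta^\star(s)=E[e^{-s\Theta}]$ satisfying $\int_0^\infty f_\Theta^\star(x)dx<\infty$, let $Z_1,\dots,Z_n$ be i.i.d. standard exponential and independent of $\Theta$ (the standing setup with $m=1$), $X_j=Z_j/\Theta$, $S_n=X_1+\cdots+X_n$, and $0<\kappa<1$. Then for each $i\in\{1,\dots,n\}$, $$TVaR_\kappa(X_i;S_n)=\frac{1}{1-\kappa}\sum_{\nu=1}^{n}(-1)^{\nu+1}\frac{VaR_\kappa(S_n)^{\nu}}{\nu!}f_\Theta^{\star(\nu-1)}\big(VaR_\kappa(S_n)\big)+\frac{1}{1-\kappa}\int_{VaR_\kappa(S_n)}^\infty f_\Theta^\star(x)\,dx.$$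
   Context: $f_\Theta^{\star(k)}$ denotes the $k$-th derivative of $f_\Theta^\star$. For $0<\kappa<1$, $VaR_\kappa(S_n)=\inf\{x:F_{S_n}(x)\ge\kappa\}$ with $F_{S_n}$ the cdf of $S_n$, and $TVaR_\kappa(X_i;S_n)=E[X_i\mid S_n>VaR_\kappa(S_n)]$. *)

theory Defs
  imports "HOL-Probability.Probability"
begin

definition cdf_rv :: "'a measure \<Rightarrow> ('a \<Rightarrow> real) \<Rightarrow> real \<Rightarrow> real" where
  "cdf_rv M X x = measure M {\<omega> \<in> space M. X \<omega> \<le> x}"

definition VaR :: "'a measure \<Rightarrow> real \<Rightarrow> ('a \<Rightarrow> real) \<Rightarrow> real" where
  "VaR M \<kappa> S = Inf {x. cdf_rv M S x \<ge> \<kappa>}"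

definition TVaR :: "'a measure \<Rightarrow> real \<Rightarrow> ('a \<Rightarrow> real) \<Rightarrow> ('a \<Rightarrow> real) \<Rightarrow> real" where
  "TVaR M \<kappa> X S =
     (let v = VaR M \<kappa> S;
          A = {\<omega> \<in> space M. S \<omega> > v}
      in (\<integral>\<omega>. X \<omega> * indicator A \<omega> \<partial>M) / measure M A)"

definition laplace_rv :: "'a measure \<Rightarrow> ('a \<Rightarrow> real) \<Rightarrow> real \<Rightarrow> real" where
  "laplace_rv M \<Theta> s = (\<integral>\<omega>. exp (- s * \<Theta> \<omega>) \<partial>M)"

end

(*
  Given \<Theta> = \<theta>, the sum T = Z_1 + ... + Z_n is Erlang distributed and independent of \<Theta>, so
  S_n = T / \<Theta> has no atoms and P(S_n > VaR) = 1 - \<kappa>.  The joint law of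
  (\<Theta>, Z_i, \<Sum>_{j \<noteq> i} Z_j) does not depend on i, hence E[X_i 1{S_n > v}] = E[S_n 1{S_n > v}] / n,
  and conditioning on \<Theta> together with t * Erlang_{n-1}(t) = n * Erlang_n(t) gives
  E[S_n 1{S_n > v}] = n E[(1/\<Theta>) \<Sum>_{k \<le> n} (v\<Theta>)^k e^{-v\<Theta>} / k!].
  By Fubini the k = 0 term is the tail integral of the Laplace transform, and the others are the
  moments E[\<Theta>^(k-1) e^{-v\<Theta>}] = (-1)^(k-1) f^(k-1)(v), obtained by differentiating under the
  expectation.
*)
theory Submission
  imports Defs "HOL-Real_Asymp.Real_Asymp"
begin

lemma power_mult_exp_le:
  fixes x c :: real
  assumes "0 \<le> x" "0 < c"
  shows "x ^ m * exp (- c * x) \<le> fact m / c ^ m"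
proof -
  have "(c * x) ^ m / fact m \<le> (\<Sum>n\<le>m. (c * x) ^ n / fact n)"
    using assms by (intro member_le_sum) auto
  also have "\<dots> \<le> exp (c * x)"
    using assms summable_exp_generic[of "c * x"]
    by (auto simp: exp_def divide_inverse ac_simps intro!: sum_le_suminf)
  finally have "x ^ m * c ^ m \<le> fact m * exp (c * x)"
    by (simp add: field_simps power_mult_distrib)
  then show ?thesis
    using assms by (simp add: exp_minus field_simps)
qed

lemma has_field_derivative_integral:
  fixes f f' :: "real \<Rightarrow> 'a \<Rightarrow> real" and g :: "'a \<Rightarrow> real"
  assumes "0 < r"
    and f_deriv: "\<And>\<omega> t. \<omega> \<in> space M \<Longrightarrow> t \<in> ball s r \<Longrightarrow>
      ((\<lambda>t. f t \<omega>) has_field_derivative f' t \<omega>) (at t)"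
    and f'_bound: "\<And>\<omega> t. \<omega> \<in> space M \<Longrightarrow> t \<in> ball s r \<Longrightarrow> \<bar>f' t \<omega>\<bar> \<le> g \<omega>"
    and f_integrable: "\<And>t. t \<in> ball s r \<Longrightarrow> integrable M (f t)"
    and "integrable M g" and "f' s \<in> borel_measurable M"
  shows "((\<lambda>t. \<integral>\<omega>. f t \<omega> \<partial>M) has_field_derivative (\<integral>\<omega>. f' s \<omega> \<partial>M)) (at s)"
proof -
  define F where "F t = (\<integral>\<omega>. f t \<omega> \<partial>M)" for t
  have "((\<lambda>h. (F (s + h) - F s) / h) \<longlongrightarrow> (\<integral>\<omega>. f' s \<omega> \<partial>M)) (at 0 within ball 0 r)"
    unfolding tendsto_at_iff_sequentially
  proof (intro allI impI)
    fix X :: "nat \<Rightarrow> real"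
    assume X: "\<forall>i. X i \<in> ball 0 r - {0}" and "X \<longlonglongrightarrow> 0"
    have X_ball: "s + X i \<in> ball s r" and X_nz: "X i \<noteq> 0" for i
      using X[rule_format, of i] by (auto simp: dist_norm)
    define q where "q i \<omega> = (f (s + X i) \<omega> - f s \<omega>) / X i" for i \<omega>
    have s_ball: "s \<in> ball s r" using \<open>0 < r\<close> by simp
    have "(\<lambda>i. \<integral>\<omega>. q i \<omega> \<partial>M) \<longlonglongrightarrow> (\<integral>\<omega>. f' s \<omega> \<partial>M)"
    proof (rule integral_dominated_convergence)
      show "q i \<in> borel_measurable M" for i
        unfolding q_def using f_integrable[OF X_ball] f_integrable[OF s_ball] by measurable
      show "AE \<omega> in M. (\<lambda>i. q i \<omega>) \<longlonglongrightarrow> f' s \<omega>"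
      proof (rule AE_I2)
        fix \<omega> assume "\<omega> \<in> space M"
        then have "((\<lambda>h. (f (s + h) \<omega> - f s \<omega>) / h) \<longlongrightarrow> f' s \<omega>) (at 0)"
          using f_deriv s_ball by (simp add: DERIV_def)
        then show "(\<lambda>i. q i \<omega>) \<longlonglongrightarrow> f' s \<omega>"
          using \<open>X \<longlonglongrightarrow> 0\<close> X_nz unfolding tendsto_at_iff_sequentially q_def o_def by auto
      qed
      show "AE \<omega> in M. norm (q i \<omega>) \<le> g \<omega>" for i
      proof (rule AE_I2)
        fix \<omega> assume "\<omega> \<in> space M"
        then have "norm (f (s + X i) \<omega> - f s \<omega>) \<le> g \<omega> * norm (s + X i - s)"
          using X_ball s_ball f_deriv f'_bound
          by (intro field_differentiable_bound[where S="ball s r"])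
             (auto intro: has_field_derivative_at_within)
        then show "norm (q i \<omega>) \<le> g \<omega>"
          using X_nz by (simp add: q_def divide_le_eq)
      qed
    qed fact+
    moreover have "(\<integral>\<omega>. q i \<omega> \<partial>M) = (F (s + X i) - F s) / X i" for i
      unfolding q_def F_def using f_integrable[OF X_ball] f_integrable[OF s_ball] by simp
    ultimately show "((\<lambda>h. (F (s + h) - F s) / h) \<circ> X) \<longlonglongrightarrow> (\<integral>\<omega>. f' s \<omega> \<partial>M)"
      by (simp add: o_def)
  qed
  moreover have "at (0::real) within ball 0 r = at 0"
    using \<open>0 < r\<close> by (intro at_within_open) auto
  ultimately show ?thesis
    unfolding DERIV_def F_def by simp
qed

lemma (in prob_space) integrable_power_mult_exp:
  fixes \<Theta> :: "'a \<Rightarrow> real"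
  assumes [measurable]: "\<Theta> \<in> borel_measurable M" and "\<forall>\<omega>\<in>space M. 0 < \<Theta> \<omega>" and "0 < s"
  shows "integrable M (\<lambda>\<omega>. \<Theta> \<omega> ^ k * exp (- s * \<Theta> \<omega>))"
proof (rule integrable_const_bound[where B="fact k / s ^ k"])
  show "AE \<omega> in M. norm (\<Theta> \<omega> ^ k * exp (- s * \<Theta> \<omega>)) \<le> fact k / s ^ k"
    using assms power_mult_exp_le[OF _ \<open>0 < s\<close>] by (intro AE_I2) (auto simp: abs_mult less_imp_le)
qed simp

lemma (in prob_space) has_field_derivative_moment_exp:
  fixes \<Theta> :: "'a \<Rightarrow> real"
  assumes [measurable]: "\<Theta> \<in> borel_measurable M" and pos: "\<forall>\<omega>\<in>space M. 0 < \<Theta> \<omega>" and "0 < s"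
  shows "((\<lambda>s. \<integral>\<omega>. \<Theta> \<omega> ^ k * exp (- s * \<Theta> \<omega>) \<partial>M) has_field_derivative
           - (\<integral>\<omega>. \<Theta> \<omega> ^ Suc k * exp (- s * \<Theta> \<omega>) \<partial>M)) (at s)"
proof -
  have "((\<lambda>s. \<integral>\<omega>. \<Theta> \<omega> ^ k * exp (- s * \<Theta> \<omega>) \<partial>M) has_field_derivative
           (\<integral>\<omega>. - (\<Theta> \<omega> ^ Suc k * exp (- s * \<Theta> \<omega>)) \<partial>M)) (at s)"
  proof (rule has_field_derivative_integral[where r="s / 2"])
    fix \<omega> t assume "\<omega> \<in> space M" and t: "t \<in> ball s (s / 2)"
    show "((\<lambda>t. \<Theta> \<omega> ^ k * exp (- t * \<Theta> \<omega>)) has_field_derivative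
        - (\<Theta> \<omega> ^ Suc k * exp (- t * \<Theta> \<omega>))) (at t)"
      by (auto intro!: derivative_eq_intros)
    have "s / 2 \<le> t"
      using t unfolding mem_ball dist_real_def by arith
    then have "s / 2 * \<Theta> \<omega> \<le> t * \<Theta> \<omega>"
      using pos \<open>\<omega> \<in> space M\<close> by (intro mult_right_mono) auto
    then show "\<bar>- (\<Theta> \<omega> ^ Suc k * exp (- t * \<Theta> \<omega>))\<bar> \<le> \<Theta> \<omega> ^ Suc k * exp (- (s / 2) * \<Theta> \<omega>)"
      using pos \<open>\<omega> \<in> space M\<close> by (auto simp: abs_mult intro!: mult_left_mono)
  next
    fix t assume "t \<in> ball s (s / 2)"
    then have "0 < t" unfolding mem_ball dist_real_def by arith
    then show "integrable M (\<lambda>\<omega>. \<Theta> \<omega> ^ k * exp (- t * \<Theta> \<omega>))"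
      by (intro integrable_power_mult_exp pos) auto
  next
    show "integrable M (\<lambda>\<omega>. \<Theta> \<omega> ^ Suc k * exp (- (s / 2) * \<Theta> \<omega>))"
      using \<open>0 < s\<close> by (intro integrable_power_mult_exp pos) auto
  qed (use \<open>0 < s\<close> in auto)
  then show ?thesis by simp
qed

lemma (in prob_space) higher_deriv_laplace_rv:
  fixes \<Theta> :: "'a \<Rightarrow> real"
  assumes [measurable]: "\<Theta> \<in> borel_measurable M" and pos: "\<forall>\<omega>\<in>space M. 0 < \<Theta> \<omega>" and "0 < s"
  shows "(deriv ^^ k) (laplace_rv M \<Theta>) s = (-1) ^ k * (\<integral>\<omega>. \<Theta> \<omega> ^ k * exp (- s * \<Theta> \<omega>) \<partial>M)"
  using \<open>0 < s\<close>
proof (induction k arbitrary: s)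
  case 0
  then show ?case by (simp add: laplace_rv_def)
next
  case (Suc k)
  have "((\<lambda>s. (-1) ^ k * (\<integral>\<omega>. \<Theta> \<omega> ^ k * exp (- s * \<Theta> \<omega>) \<partial>M)) has_field_derivative
      (-1) ^ Suc k * (\<integral>\<omega>. \<Theta> \<omega> ^ Suc k * exp (- s * \<Theta> \<omega>) \<partial>M)) (at s)"
    using DERIV_cmult[OF has_field_derivative_moment_exp[OF _ pos Suc.prems], of "(-1) ^ k"] by simp
  then have "((deriv ^^ k) (laplace_rv M \<Theta>) has_field_derivative
      (-1) ^ Suc k * (\<integral>\<omega>. \<Theta> \<omega> ^ Suc k * exp (- s * \<Theta> \<omega>) \<partial>M)) (at s)"
    by (rule has_field_derivative_transform_within_open[where S="{0<..}"]) (use Suc in auto)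
  then show ?case by (simp add: DERIV_imp_deriv)
qed

lemma nn_integral_exp_Ioi:
  fixes t c :: real
  assumes "0 < t"
  shows "(\<integral>\<^sup>+x. ennreal (exp (- x * t)) * indicator {c<..} x \<partial>lborel) = ennreal (exp (- c * t) / t)"
proof -
  have "(\<integral>\<^sup>+x. ennreal (exp (- x * t)) * indicator {c<..} x \<partial>lborel)
      = (\<integral>\<^sup>+x. ennreal (exp (- x * t)) * indicator {c..} x \<partial>lborel)"
    by (intro nn_integral_cong_AE)
       (use AE_lborel_singleton[of c] in \<open>auto elim!: eventually_mono split: split_indicator\<close>)
  also have "\<dots> = ennreal (0 - (- exp (- c * t) / t))"
  proof (rule nn_integral_FTC_atLeast)
    show "((\<lambda>x. - exp (- x * t) / t) has_real_derivative exp (- x * t)) (at x)" for x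
      using \<open>0 < t\<close> by (auto intro!: derivative_eq_intros)
    show "((\<lambda>x. - exp (- x * t) / t) \<longlongrightarrow> 0) at_top"
      using \<open>0 < t\<close> by real_asymp
  qed auto
  finally show ?thesis by simp
qed

lemma (in prob_space) nn_integral_exp_div_eq_laplace_rv_tail:
  fixes \<Theta> :: "'a \<Rightarrow> real"
  assumes [measurable]: "\<Theta> \<in> borel_measurable M" and pos: "\<forall>\<omega>\<in>space M. 0 < \<Theta> \<omega>"
    and "0 < v" and integrable: "set_integrable lborel {0<..} (laplace_rv M \<Theta>)"
  shows "(\<integral>\<^sup>+\<omega>. ennreal (exp (- v * \<Theta> \<omega>) / \<Theta> \<omega>) \<partial>M) = ennreal (LBINT x:{v<..}. laplace_rv M \<Theta> x)"
proof -
  interpret pair_sigma_finite M lborel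
    by (simp add: pair_sigma_finite_def prob_space_imp_sigma_finite prob_space_axioms
        lborel.sigma_finite_measure_axioms)
  have "(\<integral>\<^sup>+\<omega>. ennreal (exp (- v * \<Theta> \<omega>) / \<Theta> \<omega>) \<partial>M)
     = (\<integral>\<^sup>+\<omega>. (\<integral>\<^sup>+x. ennreal (exp (- x * \<Theta> \<omega>)) * indicator {v<..} x \<partial>lborel) \<partial>M)"
    by (intro nn_integral_cong) (use pos nn_integral_exp_Ioi in force)
  also have "\<dots> = (\<integral>\<^sup>+x. (\<integral>\<^sup>+\<omega>. ennreal (exp (- x * \<Theta> \<omega>)) * indicator {v<..} x \<partial>M) \<partial>lborel)"
    by (rule Fubini'[symmetric]) measurable
  also have "\<dots> = (\<integral>\<^sup>+x. ennreal (indicator {v<..} x * laplace_rv M \<Theta> x) \<partial>lborel)"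
  proof (intro nn_integral_cong)
    fix x :: real
    show "(\<integral>\<^sup>+\<omega>. ennreal (exp (- x * \<Theta> \<omega>)) * indicator {v<..} x \<partial>M)
      = ennreal (indicator {v<..} x * laplace_rv M \<Theta> x)"
    proof (cases "v < x")
      case True
      then have "integrable M (\<lambda>\<omega>. \<Theta> \<omega> ^ 0 * exp (- x * \<Theta> \<omega>))"
        using \<open>0 < v\<close> by (intro integrable_power_mult_exp pos) auto
      then have "(\<integral>\<^sup>+\<omega>. ennreal (exp (- x * \<Theta> \<omega>)) \<partial>M) = ennreal (laplace_rv M \<Theta> x)"
        unfolding laplace_rv_def by (intro nn_integral_eq_integral) auto
      then show ?thesis using True by simp
    qed simp
  qed
  also have "\<dots> = ennreal (\<integral>x. indicator {v<..} x * laplace_rv M \<Theta> x \<partial>lborel)"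
  proof (rule nn_integral_eq_integral)
    show "integrable lborel (\<lambda>x. indicator {v<..} x * laplace_rv M \<Theta> x)"
      using set_integrable_subset[OF integrable] \<open>0 < v\<close> by (simp add: set_integrable_def)
  qed (auto simp: laplace_rv_def)
  finally show ?thesis
    by (simp add: set_lebesgue_integral_def)
qed

lemma set_integral_laplace_rv_nonneg: "0 \<le> (LBINT x:A. laplace_rv M \<Theta> x)"
  unfolding set_lebesgue_integral_def
  by (intro Bochner_Integration.integral_nonneg) (auto simp: laplace_rv_def)

lemma one_minus_erlang_CDF_div:
  fixes \<theta> v :: real
  assumes "0 < \<theta>" "0 \<le> v"
  shows "(1 - erlang_CDF n 1 (v * \<theta>)) / \<theta>
    = exp (- v * \<theta>) / \<theta> + (\<Sum>k=1..n. v ^ k / fact k * (\<theta> ^ (k - 1) * exp (- v * \<theta>)))"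
proof -
  have "(v * \<theta>) ^ k * exp (- (v * \<theta>)) / fact k / \<theta> = v ^ k / fact k * (\<theta> ^ (k - 1) * exp (- v * \<theta>))"
    if k: "k \<in> {1..n}" for k
  proof -
    obtain m where "k = Suc m" using k by (cases k) auto
    then show ?thesis
      using \<open>0 < \<theta>\<close> by (simp add: power_mult_distrib field_simps del: fact_Suc)
  qed
  moreover have "{..n} = insert 0 {1..n}" by auto
  moreover have "\<not> v * \<theta> < 0"
    using assms by (simp add: not_less)
  ultimately show ?thesis
    by (simp add: erlang_CDF_def add_divide_distrib sum_divide_distrib)
qed

lemma (in prob_space) nn_integral_erlang_survival_div:
  fixes \<Theta> :: "'a \<Rightarrow> real"
  assumes [measurable]: "\<Theta> \<in> borel_measurable M" and pos: "\<forall>\<omega>\<in>space M. 0 < \<Theta> \<omega>"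
    and "0 < v" and integrable: "set_integrable lborel {0<..} (laplace_rv M \<Theta>)"
  shows "(\<integral>\<^sup>+\<omega>. ennreal ((1 - erlang_CDF n 1 (v * \<Theta> \<omega>)) / \<Theta> \<omega>) \<partial>M)
    = ennreal ((LBINT x:{v<..}. laplace_rv M \<Theta> x)
        + (\<Sum>k=1..n. v ^ k / fact k * (\<integral>\<omega>. \<Theta> \<omega> ^ (k - 1) * exp (- v * \<Theta> \<omega>) \<partial>M)))"
proof -
  define b where "b k \<omega> = v ^ k / fact k * (\<Theta> \<omega> ^ (k - 1) * exp (- v * \<Theta> \<omega>))" for k \<omega>
  have b_nonneg: "0 \<le> b k \<omega>" if "\<omega> \<in> space M" for k \<omega>
    using pos that \<open>0 < v\<close> unfolding b_def by (auto intro: less_imp_le)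
  have "(\<integral>\<^sup>+\<omega>. ennreal ((1 - erlang_CDF n 1 (v * \<Theta> \<omega>)) / \<Theta> \<omega>) \<partial>M)
      = (\<integral>\<^sup>+\<omega>. ennreal (exp (- v * \<Theta> \<omega>) / \<Theta> \<omega>) + (\<Sum>k=1..n. ennreal (b k \<omega>)) \<partial>M)"
  proof (intro nn_integral_cong)
    fix \<omega> assume "\<omega> \<in> space M"
    then have "0 < \<Theta> \<omega>" using pos by auto
    then show "ennreal ((1 - erlang_CDF n 1 (v * \<Theta> \<omega>)) / \<Theta> \<omega>)
      = ennreal (exp (- v * \<Theta> \<omega>) / \<Theta> \<omega>) + (\<Sum>k=1..n. ennreal (b k \<omega>))"
      using b_nonneg[OF \<open>\<omega> \<in> space M\<close>] \<open>0 < v\<close>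
      by (simp add: one_minus_erlang_CDF_div b_def ennreal_plus sum_nonneg)
  qed
  also have "\<dots> = (\<integral>\<^sup>+\<omega>. ennreal (exp (- v * \<Theta> \<omega>) / \<Theta> \<omega>) \<partial>M)
      + (\<Sum>k=1..n. \<integral>\<^sup>+\<omega>. ennreal (b k \<omega>) \<partial>M)"
    by (subst nn_integral_add) (auto simp: b_def intro!: nn_integral_sum)
  also have "(\<Sum>k=1..n. \<integral>\<^sup>+\<omega>. ennreal (b k \<omega>) \<partial>M) = (\<Sum>k=1..n. ennreal (\<integral>\<omega>. b k \<omega> \<partial>M))"
  proof (intro sum.cong refl nn_integral_eq_integral)
    show "integrable M (b k)" for k
      unfolding b_def using \<open>0 < v\<close> by (intro integrable_mult_right integrable_power_mult_exp pos) auto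
  qed (use b_nonneg in auto)
  also have "\<dots> = ennreal (\<Sum>k=1..n. \<integral>\<omega>. b k \<omega> \<partial>M)"
    using b_nonneg by (intro sum_ennreal integral_nonneg_AE AE_I2) auto
  also have "(\<Sum>k=1..n. \<integral>\<omega>. b k \<omega> \<partial>M)
      = (\<Sum>k=1..n. v ^ k / fact k * (\<integral>\<omega>. \<Theta> \<omega> ^ (k - 1) * exp (- v * \<Theta> \<omega>) \<partial>M))"
    by (simp add: b_def[abs_def])
  also have "(\<integral>\<^sup>+\<omega>. ennreal (exp (- v * \<Theta> \<omega>) / \<Theta> \<omega>) \<partial>M) = ennreal (LBINT x:{v<..}. laplace_rv M \<Theta> x)"
    by (rule nn_integral_exp_div_eq_laplace_rv_tail[OF _ pos \<open>0 < v\<close> integrable]) simp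
  finally have "(\<integral>\<^sup>+\<omega>. ennreal ((1 - erlang_CDF n 1 (v * \<Theta> \<omega>)) / \<Theta> \<omega>) \<partial>M)
    = ennreal (LBINT x:{v<..}. laplace_rv M \<Theta> x)
      + ennreal (\<Sum>k=1..n. v ^ k / fact k * (\<integral>\<omega>. \<Theta> \<omega> ^ (k - 1) * exp (- v * \<Theta> \<omega>) \<partial>M))" .
  moreover have "0 \<le> (\<Sum>k=1..n. v ^ k / fact k * (\<integral>\<omega>. \<Theta> \<omega> ^ (k - 1) * exp (- v * \<Theta> \<omega>) \<partial>M))"
    using \<open>0 < v\<close> pos by (intro sum_nonneg mult_nonneg_nonneg integral_nonneg_AE AE_I2) auto
  ultimately show ?thesis
    by (simp only: ennreal_plus[OF set_integral_laplace_rv_nonneg])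
qed

lemma erlang_density_times_self:
  assumes "0 < l"
  shows "t * erlang_density k l t = Suc k / l * erlang_density (Suc k) l t"
proof -
  have "erlang_density (Suc k) l t = l * t / Suc k * erlang_density k l t"
    by (simp add: erlang_density_def ac_simps del: of_nat_Suc)
  then show ?thesis
    using assms by (simp del: of_nat_Suc)
qed
lemma borel_measurable_erlang_CDF[measurable]: "erlang_CDF k l \<in> borel_measurable borel"
  unfolding erlang_CDF_def[abs_def] by measurable

lemma nn_integral_erlang_tail_moment:
  assumes "0 < l"
  shows "(\<integral>\<^sup>+t. ennreal (t * indicator {c<..} t) \<partial>density lborel (erlang_density k l))
    = ennreal (Suc k / l * (1 - erlang_CDF (Suc k) l c))"
proof -
  interpret D: prob_space "density lborel (erlang_density (Suc k) l)"
    using assms by (rule prob_space_erlang_density)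
  have "erlang_density k l t * t = Suc k / l * erlang_density (Suc k) l t" for t
    using erlang_density_times_self[OF assms] by (simp add: mult.commute)
  then have "(\<integral>\<^sup>+t. ennreal (t * indicator {c<..} t) \<partial>density lborel (erlang_density k l))
      = (\<integral>\<^sup>+t. ennreal (Suc k / l) * (ennreal (erlang_density (Suc k) l t) * indicator {c<..} t) \<partial>lborel)"
    using assms
    by (subst nn_integral_density)
       (auto intro!: nn_integral_cong simp: ennreal_mult'[symmetric] split: split_indicator)
  also have "\<dots> = ennreal (Suc k / l) * emeasure (density lborel (erlang_density (Suc k) l)) {c<..}"
    using assms by (subst nn_integral_cmult) (auto simp: emeasure_density)
  also have "emeasure (density lborel (erlang_density (Suc k) l)) {c<..} = 1 - erlang_CDF (Suc k) l c"
  proof -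
    have "D.prob {..c} = erlang_CDF (Suc k) l c"
      using assms emeasure_erlang_density[OF assms, of "Suc k" c] by (simp add: D.emeasure_eq_measure)
    moreover have "{c<..} = space (density lborel (erlang_density (Suc k) l)) - {..c}" by auto
    ultimately show ?thesis
      using D.prob_compl[of "{..c}"] by (simp add: D.emeasure_eq_measure)
  qed
  finally show ?thesis
    using assms by (subst ennreal_mult') auto
qed

lemma (in prob_space) distr_borel_eq_density:
  "distributed M lborel X f \<Longrightarrow> distr M borel X = density lborel f"
  by (metis distr_cong distributed_distr_eq_density sets_lborel)

lemma (in prob_space) prob_eq_indep_fun_eq_0:
  fixes X Y :: "'a \<Rightarrow> real"
  assumes "indep_var borel Y borel X" and X: "distributed M lborel X f"
    and [measurable]: "g \<in> borel_measurable borel"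
  shows "prob {\<omega> \<in> space M. X \<omega> = g (Y \<omega>)} = 0"
proof -
  have [measurable]: "Y \<in> borel_measurable M" "X \<in> borel_measurable M"
    using assms(1) by (auto simp: indep_var_distribution_eq)
  define graph where "graph = {p :: real \<times> real. snd p = g (fst p)}"
  have "Measurable.pred (borel \<Otimes>\<^sub>M borel) (\<lambda>p :: real \<times> real. snd p = g (fst p))"
    by measurable
  then have graph_sets: "graph \<in> sets (borel \<Otimes>\<^sub>M borel)"
    unfolding graph_def pred_def by (simp add: space_pair_measure)
  interpret D: prob_space "density lborel f"
    using prob_space_distr[of X borel] distr_borel_eq_density[OF X] by simp
  have "emeasure M {\<omega> \<in> space M. X \<omega> = g (Y \<omega>)}
      = emeasure (distr M (borel \<Otimes>\<^sub>M borel) (\<lambda>\<omega>. (Y \<omega>, X \<omega>))) graph"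
    using graph_sets by (subst emeasure_distr) (auto simp: graph_def intro!: arg_cong[where f="emeasure M"])
  also have "\<dots> = emeasure (distr M borel Y \<Otimes>\<^sub>M density lborel f) graph"
    using assms(1) by (simp add: indep_var_distribution_eq distr_borel_eq_density[OF X])
  also have "\<dots> = (\<integral>\<^sup>+y. emeasure (density lborel f) {g y} \<partial>distr M borel Y)"
    using graph_sets
    by (subst D.emeasure_pair_measure_alt) (auto simp: graph_def vimage_def)
  also have "\<dots> = 0"
  proof -
    have "{x} \<in> null_sets (density lborel f)" for x
    proof -
      have "AE y in lborel. y \<in> {x} \<longrightarrow> f y = 0"
        using AE_lborel_singleton[of x] by eventually_elim auto
      then show ?thesis
        using distributed_borel_measurable[OF X] by (simp add: null_sets_density_iff)
    qed
    then show ?thesis by (simp add: null_setsD1)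
  qed
  finally show ?thesis by (simp add: measure_def)
qed

lemma (in prob_space) cdf_rv_VaR:
  fixes S :: "'a \<Rightarrow> real"
  assumes [measurable]: "S \<in> borel_measurable M"
    and no_atoms: "\<And>x. prob {\<omega> \<in> space M. S \<omega> = x} = 0"
    and "0 < \<kappa>" "\<kappa> < 1"
  shows "cdf_rv M S (VaR M \<kappa> S) = \<kappa>"
proof -
  define D where "D = distr M borel S"
  interpret D: real_distribution D
    unfolding D_def by (intro real_distribution_distr) simp
  have cdf_rv_eq: "cdf_rv M S x = cdf D x" for x
    unfolding cdf_rv_def cdf_def2 D_def
    by (subst measure_distr) (auto intro!: arg_cong[where f="measure M"])
  have cont: "isCont (cdf D) x" for x
  proof -
    have "S -` {x} \<inter> space M = {\<omega> \<in> space M. S \<omega> = x}" by auto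
    then show ?thesis
      using no_atoms[of x] D.isCont_cdf[of x] by (simp add: D_def measure_distr)
  qed
  define K where "K = {x. \<kappa> \<le> cdf D x}"
  have "K \<noteq> {}"
    using order_tendstoD(1)[OF D.cdf_lim_at_top_prob \<open>\<kappa> < 1\<close>]
    by (auto simp: K_def eventually_at_top_linorder dest: less_imp_le)
  moreover have "bdd_below K"
  proof -
    obtain b where b: "\<And>x. x \<le> b \<Longrightarrow> cdf D x < \<kappa>"
      using order_tendstoD(2)[OF D.cdf_lim_at_bot \<open>0 < \<kappa>\<close>] by (auto simp: eventually_at_bot_linorder)
    have "b \<le> x" if "x \<in> K" for x
      using b[of x] that by (force simp: K_def)
    then show ?thesis by (rule bdd_belowI)
  qed
  moreover have "closed K"
    unfolding K_def using cont
    by (intro closed_Collect_le continuous_on_const continuous_at_imp_continuous_on) auto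
  ultimately have "Inf K \<in> K"
    by (rule closed_contains_Inf)
  have "cdf D (Inf K) \<le> \<kappa>"
  proof (rule ccontr)
    assume "\<not> cdf D (Inf K) \<le> \<kappa>"
    then have "\<forall>\<^sub>F y in at_left (Inf K). \<kappa> < cdf D y"
      using cont[of "Inf K"] by (intro order_tendstoD(1)) (auto simp: isCont_def filterlim_at_split)
    then obtain b where "b < Inf K" "\<And>y. b < y \<Longrightarrow> y < Inf K \<Longrightarrow> \<kappa> < cdf D y"
      by (auto simp: eventually_at_left_field)
    then have "(b + Inf K) / 2 \<in> K"
      by (auto simp: K_def intro!: less_imp_le)
    then show False
      using cInf_lower[OF _ \<open>bdd_below K\<close>] \<open>b < Inf K\<close> by force
  qed
  with \<open>Inf K \<in> K\<close> show ?thesis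
    by (simp add: VaR_def cdf_rv_eq K_def)
qed

locale exponential_mixture = prob_space +
  fixes \<Theta> :: "'a \<Rightarrow> real" and Z :: "nat \<Rightarrow> 'a \<Rightarrow> real" and n :: nat
  assumes \<Theta>_measurable[measurable]: "\<Theta> \<in> borel_measurable M"
    and \<Theta>_pos: "\<forall>\<omega>\<in>space M. 0 < \<Theta> \<omega>"
    and Z_exponential: "\<forall>j\<in>{1..n}. distributed M lborel (Z j) (exponential_density 1)"
    and indep: "indep_vars (\<lambda>_. borel) (\<lambda>j. if j = 0 then \<Theta> else Z j) {0..n}"
    and two_le_n: "2 \<le> n"
begin

abbreviation T :: "'a \<Rightarrow> real" where
  "T \<equiv> \<lambda>\<omega>. \<Sum>j=1..n. Z j \<omega>"

abbreviation S :: "'a \<Rightarrow> real" where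
  "S \<equiv> \<lambda>\<omega>. \<Sum>j=1..n. Z j \<omega> / \<Theta> \<omega>"

lemma Z_measurable: "j \<in> {1..n} \<Longrightarrow> Z j \<in> borel_measurable M"
  using Z_exponential distributed_measurable by fastforce

lemma T_measurable[measurable]: "T \<in> borel_measurable M"
  using Z_measurable by (intro borel_measurable_sum) auto

lemma S_measurable[measurable]: "S \<in> borel_measurable M"
  unfolding sum_divide_distrib[symmetric] by measurable

lemma Z_nonneg:
  assumes "j \<in> {1..n}"
  shows "AE \<omega> in M. 0 \<le> Z j \<omega>"
proof -
  have "distributed M lborel (Z j) (exponential_density 1)"
    using Z_exponential assms by blast
  then show ?thesis
    by (subst distributed_AE2) (auto simp: exponential_density_def)
qed

lemma indep_Z: "indep_vars (\<lambda>_. borel) Z {1..n}"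
proof -
  have "indep_vars (\<lambda>_. borel) (\<lambda>j. if j = 0 then \<Theta> else Z j) {1..n}"
    using indep by (rule indep_vars_subset) auto
  then show ?thesis
    by (rule indep_vars_cong[THEN iffD1, rotated 3]) auto
qed

lemma T_erlang: "distributed M lborel T (erlang_density (n - 1) 1)"
  using exponential_distributed_sum[of "{1..n}" 1 Z, OF _ _ _ _ indep_Z] Z_exponential two_le_n
  by auto

lemma indep_\<Theta>_T: "indep_var borel \<Theta> borel T"
proof -
  have "indep_vars (\<lambda>_. borel) (\<lambda>j. if j = 0 then \<Theta> else Z j) (insert 0 {1..n})"
    using indep by (simp add: atLeast0_atMost_Suc_eq_insert_0[symmetric] atLeastAtMost_insertL)
  from indep_vars_sum[OF _ _ this] show ?thesis
    by simp
qed

(* indep_var only relates random variables of a common type, so \<Theta> is padded with a dummy 0. *)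
lemma distr_\<Theta>_Z_rest:
  assumes "i \<in> {1..n}"
  shows "distr M ((borel \<Otimes>\<^sub>M borel) \<Otimes>\<^sub>M (borel \<Otimes>\<^sub>M borel))
      (\<lambda>\<omega>. ((\<Theta> \<omega>, 0), (Z i \<omega>, \<Sum>j\<in>{1..n}-{i}. Z j \<omega>)))
    = distr M (borel \<Otimes>\<^sub>M borel) (\<lambda>\<omega>. (\<Theta> \<omega>, 0 :: real)) \<Otimes>\<^sub>M
      (density lborel (exponential_density 1) \<Otimes>\<^sub>M density lborel (erlang_density (n - 2) 1))"
proof -
  define Y where "Y j = (if j = 0 then \<Theta> else Z j)" for j
  have "indep_var (PiM {0} (\<lambda>_. borel)) (\<lambda>\<omega>. restrict (\<lambda>j. Y j \<omega>) {0})
      (PiM {1..n} (\<lambda>_. borel)) (\<lambda>\<omega>. restrict (\<lambda>j. Y j \<omega>) {1..n})"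
    using indep unfolding Y_def[abs_def] by (intro indep_var_restrict) auto
  then have "indep_var (borel \<Otimes>\<^sub>M borel) ((\<lambda>f. (f 0, 0 :: real)) \<circ> (\<lambda>\<omega>. restrict (\<lambda>j. Y j \<omega>) {0}))
      (borel \<Otimes>\<^sub>M borel) ((\<lambda>f. (f i, \<Sum>j\<in>{1..n}-{i}. f j)) \<circ> (\<lambda>\<omega>. restrict (\<lambda>j. Y j \<omega>) {1..n}))"
    by (rule indep_var_compose) (use assms in measurable)
  moreover have "(\<lambda>f. (f 0, 0 :: real)) \<circ> (\<lambda>\<omega>. restrict (\<lambda>j. Y j \<omega>) {0}) = (\<lambda>\<omega>. (\<Theta> \<omega>, 0))"
    by (auto simp: Y_def)
  moreover have "(\<lambda>f. (f i, \<Sum>j\<in>{1..n}-{i}. f j)) \<circ> (\<lambda>\<omega>. restrict (\<lambda>j. Y j \<omega>) {1..n})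
      = (\<lambda>\<omega>. (Z i \<omega>, \<Sum>j\<in>{1..n}-{i}. Z j \<omega>))"
    using assms by (auto simp: Y_def fun_eq_iff intro!: sum.cong)
  ultimately have indep_\<Theta>: "indep_var (borel \<Otimes>\<^sub>M borel) (\<lambda>\<omega>. (\<Theta> \<omega>, 0 :: real))
      (borel \<Otimes>\<^sub>M borel) (\<lambda>\<omega>. (Z i \<omega>, \<Sum>j\<in>{1..n}-{i}. Z j \<omega>))"
    by simp
  have indep_Z_rest: "indep_var borel (Z i) borel (\<lambda>\<omega>. \<Sum>j\<in>{1..n}-{i}. Z j \<omega>)"
    using assms indep_Z by (intro indep_vars_sum) (auto simp: insert_absorb)
  have "(if i = 1 then 2 else 1) \<in> {1..n} - {i}"
    using assms two_le_n by auto
  then have "{1..n} - {i} \<noteq> {}"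
    by blast
  moreover have "card ({1..n} - {i}) - 1 = n - 2"
    using assms by auto
  ultimately have "distributed M lborel (\<lambda>\<omega>. \<Sum>j\<in>{1..n}-{i}. Z j \<omega>) (erlang_density (n - 2) 1)"
    using exponential_distributed_sum[of "{1..n} - {i}" 1 Z] Z_exponential
      indep_vars_subset[OF indep_Z, of "{1..n} - {i}"]
    by auto
  moreover have "distr M borel (Z i) = density lborel (exponential_density 1)"
    using Z_exponential assms by (simp add: distr_borel_eq_density)
  ultimately have "distr M (borel \<Otimes>\<^sub>M borel) (\<lambda>\<omega>. (Z i \<omega>, \<Sum>j\<in>{1..n}-{i}. Z j \<omega>))
      = density lborel (exponential_density 1) \<Otimes>\<^sub>M density lborel (erlang_density (n - 2) 1)"
    using indep_Z_rest by (simp add: indep_var_distribution_eq distr_borel_eq_density)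
  then show ?thesis
    using indep_\<Theta> by (simp add: indep_var_distribution_eq)
qed

lemma nn_integral_share_eq:
  assumes "i \<in> {1..n}" "j \<in> {1..n}"
  shows "(\<integral>\<^sup>+\<omega>. ennreal (Z i \<omega> / \<Theta> \<omega> * indicator {\<omega> \<in> space M. v < S \<omega>} \<omega>) \<partial>M)
    = (\<integral>\<^sup>+\<omega>. ennreal (Z j \<omega> / \<Theta> \<omega> * indicator {\<omega> \<in> space M. v < S \<omega>} \<omega>) \<partial>M)"
proof -
  define Q where "Q = distr M (borel \<Otimes>\<^sub>M borel) (\<lambda>\<omega>. (\<Theta> \<omega>, 0 :: real)) \<Otimes>\<^sub>M
      (density lborel (exponential_density 1) \<Otimes>\<^sub>M density lborel (erlang_density (n - 2) 1))"
  define g :: "(real \<times> real) \<times> (real \<times> real) \<Rightarrow> ennreal" where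
    "g p = (let \<theta> = fst (fst p); z = fst (snd p); w = snd (snd p)
      in ennreal (z / \<theta> * indicator {v<..} ((z + w) / \<theta>)))" for p
  have g_measurable[measurable]: "g \<in> borel_measurable ((borel \<Otimes>\<^sub>M borel) \<Otimes>\<^sub>M (borel \<Otimes>\<^sub>M borel))"
    unfolding g_def[abs_def] Let_def by measurable
  have share_eq_Q: "(\<integral>\<^sup>+\<omega>. ennreal (Z k \<omega> / \<Theta> \<omega> * indicator {\<omega> \<in> space M. v < S \<omega>} \<omega>) \<partial>M)
      = integral\<^sup>N Q g" if k: "k \<in> {1..n}" for k
  proof -
    have [measurable]: "Z l \<in> borel_measurable M" if "l \<in> {1..n}" for l
      using Z_measurable that .
    have "S \<omega> = (Z k \<omega> + (\<Sum>l\<in>{1..n}-{k}. Z l \<omega>)) / \<Theta> \<omega>" for \<omega>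
      using k by (simp add: sum_divide_distrib[symmetric] sum.remove)
    then have "(\<integral>\<^sup>+\<omega>. ennreal (Z k \<omega> / \<Theta> \<omega> * indicator {\<omega> \<in> space M. v < S \<omega>} \<omega>) \<partial>M)
        = (\<integral>\<^sup>+\<omega>. g ((\<Theta> \<omega>, 0), (Z k \<omega>, \<Sum>l\<in>{1..n}-{k}. Z l \<omega>)) \<partial>M)"
      by (intro nn_integral_cong) (simp add: g_def Let_def split: split_indicator)
    also have "\<dots> = integral\<^sup>N (distr M ((borel \<Otimes>\<^sub>M borel) \<Otimes>\<^sub>M (borel \<Otimes>\<^sub>M borel))
        (\<lambda>\<omega>. ((\<Theta> \<omega>, 0), (Z k \<omega>, \<Sum>l\<in>{1..n}-{k}. Z l \<omega>)))) g"
      using k by (subst nn_integral_distr) measurable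
    also have "\<dots> = integral\<^sup>N Q g"
      unfolding distr_\<Theta>_Z_rest[OF k] Q_def ..
    finally show ?thesis .
  qed
  show ?thesis
    using share_eq_Q[OF assms(1)] share_eq_Q[OF assms(2)] by simp
qed

lemma nn_integral_share_tail:
  assumes "i \<in> {1..n}"
  shows "of_nat n * (\<integral>\<^sup>+\<omega>. ennreal (Z i \<omega> / \<Theta> \<omega> * indicator {\<omega> \<in> space M. v < S \<omega>} \<omega>) \<partial>M)
    = (\<integral>\<^sup>+\<omega>. ennreal (S \<omega> * indicator {\<omega> \<in> space M. v < S \<omega>} \<omega>) \<partial>M)"
proof -
  have "(\<Sum>j\<in>{1..n}. \<integral>\<^sup>+\<omega>. ennreal (Z j \<omega> / \<Theta> \<omega> * indicator {\<omega> \<in> space M. v < S \<omega>} \<omega>) \<partial>M)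
      = (\<Sum>j\<in>{1..n}. \<integral>\<^sup>+\<omega>. ennreal (Z i \<omega> / \<Theta> \<omega> * indicator {\<omega> \<in> space M. v < S \<omega>} \<omega>) \<partial>M)"
    by (intro sum.cong refl nn_integral_share_eq assms)
  then have "of_nat n * (\<integral>\<^sup>+\<omega>. ennreal (Z i \<omega> / \<Theta> \<omega> * indicator {\<omega> \<in> space M. v < S \<omega>} \<omega>) \<partial>M)
      = (\<Sum>j\<in>{1..n}. \<integral>\<^sup>+\<omega>. ennreal (Z j \<omega> / \<Theta> \<omega> * indicator {\<omega> \<in> space M. v < S \<omega>} \<omega>) \<partial>M)"
    by simp
  also have "\<dots> = (\<integral>\<^sup>+\<omega>. (\<Sum>j\<in>{1..n}. ennreal (Z j \<omega> / \<Theta> \<omega> * indicator {\<omega> \<in> space M. v < S \<omega>} \<omega>)) \<partial>M)"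
  proof (intro nn_integral_sum[symmetric])
    fix j assume "j \<in> {1..n}"
    then have [measurable]: "Z j \<in> borel_measurable M" by (rule Z_measurable)
    show "(\<lambda>\<omega>. ennreal (Z j \<omega> / \<Theta> \<omega> * indicator {\<omega> \<in> space M. v < S \<omega>} \<omega>)) \<in> borel_measurable M"
      by measurable
  qed
  also have "\<dots> = (\<integral>\<^sup>+\<omega>. ennreal (S \<omega> * indicator {\<omega> \<in> space M. v < S \<omega>} \<omega>) \<partial>M)"
  proof (intro nn_integral_cong_AE)
    have "AE \<omega> in M. \<forall>j\<in>{1..n}. 0 \<le> Z j \<omega>"
      using Z_nonneg by (intro AE_finite_allI) auto
    then show "AE \<omega> in M. (\<Sum>j\<in>{1..n}. ennreal (Z j \<omega> / \<Theta> \<omega> * indicator {\<omega> \<in> space M. v < S \<omega>} \<omega>))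
        = ennreal (S \<omega> * indicator {\<omega> \<in> space M. v < S \<omega>} \<omega>)"
      using AE_space
    proof eventually_elim
      case (elim \<omega>)
      then have "0 < \<Theta> \<omega>" using \<Theta>_pos by auto
      with elim have "(\<Sum>j\<in>{1..n}. ennreal (Z j \<omega> / \<Theta> \<omega> * indicator {\<omega> \<in> space M. v < S \<omega>} \<omega>))
          = ennreal (\<Sum>j\<in>{1..n}. Z j \<omega> / \<Theta> \<omega> * indicator {\<omega> \<in> space M. v < S \<omega>} \<omega>)"
        by (intro sum_ennreal) auto
      then show ?case
        by (simp only: sum_distrib_right)
    qed
  qed
  finally show ?thesis .
qed

lemma nn_integral_S_tail:
  assumes "0 < v"
  shows "(\<integral>\<^sup>+\<omega>. ennreal (S \<omega> * indicator {\<omega> \<in> space M. v < S \<omega>} \<omega>) \<partial>M)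
    = of_nat n * (\<integral>\<^sup>+\<omega>. ennreal ((1 - erlang_CDF n 1 (v * \<Theta> \<omega>)) / \<Theta> \<omega>) \<partial>M)"
proof -
  define h :: "real \<times> real \<Rightarrow> ennreal" where
    "h p = ennreal (snd p / fst p * indicator {v<..} (snd p / fst p))" for p
  have h_measurable[measurable]: "h \<in> borel_measurable (borel \<Otimes>\<^sub>M borel)"
    unfolding h_def[abs_def] by measurable
  interpret E: prob_space "density lborel (erlang_density (n - 1) 1)"
    by (rule prob_space_erlang_density) simp
  have inner: "(\<integral>\<^sup>+t. h (\<theta>, t) \<partial>density lborel (erlang_density (n - 1) 1))
      = of_nat n * ennreal ((1 - erlang_CDF n 1 (v * \<theta>)) / \<theta>)" if "0 < \<theta>" for \<theta>
  proof -
    have "(\<integral>\<^sup>+t. h (\<theta>, t) \<partial>density lborel (erlang_density (n - 1) 1))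
        = (\<integral>\<^sup>+t. ennreal (1 / \<theta>) * ennreal (t * indicator {v * \<theta><..} t) \<partial>density lborel (erlang_density (n - 1) 1))"
      using that
      by (intro nn_integral_cong)
         (auto simp: h_def ennreal_mult'[symmetric] field_simps split: split_indicator)
    also have "\<dots> = ennreal (1 / \<theta>) * ennreal (n * (1 - erlang_CDF n 1 (v * \<theta>)))"
      using two_le_n
      by (subst nn_integral_cmult) (simp_all add: nn_integral_erlang_tail_moment)
    finally show ?thesis
      using that by (simp add: ennreal_mult'[symmetric] ennreal_of_nat_eq_real_of_nat)
  qed
  have "(\<integral>\<^sup>+\<omega>. ennreal (S \<omega> * indicator {\<omega> \<in> space M. v < S \<omega>} \<omega>) \<partial>M) = (\<integral>\<^sup>+\<omega>. h (\<Theta> \<omega>, T \<omega>) \<partial>M)"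
    by (intro nn_integral_cong) (simp add: h_def sum_divide_distrib[symmetric] split: split_indicator)
  also have "\<dots> = integral\<^sup>N (distr M (borel \<Otimes>\<^sub>M borel) (\<lambda>\<omega>. (\<Theta> \<omega>, T \<omega>))) h"
    by (rule nn_integral_distr[symmetric]) measurable
  also have "\<dots> = integral\<^sup>N (distr M borel \<Theta> \<Otimes>\<^sub>M density lborel (erlang_density (n - 1) 1)) h"
    using indep_\<Theta>_T T_erlang by (simp add: indep_var_distribution_eq distr_borel_eq_density)
  also have "\<dots> = (\<integral>\<^sup>+\<theta>. \<integral>\<^sup>+t. h (\<theta>, t) \<partial>density lborel (erlang_density (n - 1) 1) \<partial>distr M borel \<Theta>)"
    by (rule E.nn_integral_fst[symmetric]) simp
  also have "\<dots> = (\<integral>\<^sup>+\<theta>. of_nat n * ennreal ((1 - erlang_CDF n 1 (v * \<theta>)) / \<theta>) \<partial>distr M borel \<Theta>)"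
  proof (intro nn_integral_cong_AE)
    show "AE \<theta> in distr M borel \<Theta>. (\<integral>\<^sup>+t. h (\<theta>, t) \<partial>density lborel (erlang_density (n - 1) 1))
        = of_nat n * ennreal ((1 - erlang_CDF n 1 (v * \<theta>)) / \<theta>)"
    proof -
      have "AE \<theta> in distr M borel \<Theta>. 0 < \<theta>"
        using \<Theta>_pos by (subst AE_distr_iff) (auto intro!: AE_I2)
      then show ?thesis
        by (rule eventually_mono) (rule inner)
    qed
  qed
  also have "\<dots> = (\<integral>\<^sup>+\<omega>. of_nat n * ennreal ((1 - erlang_CDF n 1 (v * \<Theta> \<omega>)) / \<Theta> \<omega>) \<partial>M)"
    by (rule nn_integral_distr) measurable
  also have "\<dots> = of_nat n * (\<integral>\<^sup>+\<omega>. ennreal ((1 - erlang_CDF n 1 (v * \<Theta> \<omega>)) / \<Theta> \<omega>) \<partial>M)"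
    by (rule nn_integral_cmult) measurable
  finally show ?thesis .
qed

lemma prob_S_eq: "prob {\<omega> \<in> space M. S \<omega> = x} = 0"
proof -
  have "{\<omega> \<in> space M. S \<omega> = x} = {\<omega> \<in> space M. T \<omega> = x * \<Theta> \<omega>}"
    using \<Theta>_pos by (auto simp: sum_divide_distrib[symmetric] field_simps)
  then show ?thesis
    using prob_eq_indep_fun_eq_0[OF indep_\<Theta>_T T_erlang, of "\<lambda>\<theta>. x * \<theta>"] by simp
qed

lemma prob_VaR_less_S:
  assumes "0 < \<kappa>" "\<kappa> < 1"
  shows "prob {\<omega> \<in> space M. VaR M \<kappa> S < S \<omega>} = 1 - \<kappa>"
proof -
  have "prob {\<omega> \<in> space M. VaR M \<kappa> S < S \<omega>} = prob (space M - {\<omega> \<in> space M. S \<omega> \<le> VaR M \<kappa> S})"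
    by (intro arg_cong[where f=prob]) auto
  also have "\<dots> = 1 - cdf_rv M S (VaR M \<kappa> S)"
    unfolding cdf_rv_def by (rule prob_compl) measurable
  finally show ?thesis
    using cdf_rv_VaR[OF S_measurable prob_S_eq assms] by simp
qed

lemma VaR_S_pos:
  assumes "0 < \<kappa>" "\<kappa> < 1"
  shows "0 < VaR M \<kappa> S"
proof (rule ccontr)
  assume "\<not> 0 < VaR M \<kappa> S"
  moreover have "{\<omega> \<in> space M. S \<omega> \<le> 0} \<in> events"
    by measurable
  ultimately have "cdf_rv M S (VaR M \<kappa> S) \<le> cdf_rv M S 0"
    unfolding cdf_rv_def by (intro finite_measure_mono) auto
  also have "cdf_rv M S 0 = prob {\<omega> \<in> space M. T \<omega> \<le> 0}"
    using \<Theta>_pos unfolding cdf_rv_def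
    by (intro arg_cong[where f=prob]) (auto simp: sum_divide_distrib[symmetric] divide_le_0_iff)
  also have "\<dots> = 0"
    using erlang_distributed_le[OF T_erlang] by (simp add: erlang_CDF_at0)
  finally show False
    using cdf_rv_VaR[OF S_measurable prob_S_eq assms] assms by simp
qed

lemma integral_share_tail:
  assumes "i \<in> {1..n}" and "0 < v"
    and integrable: "set_integrable lborel {0<..} (laplace_rv M \<Theta>)"
  shows "(\<integral>\<omega>. Z i \<omega> / \<Theta> \<omega> * indicator {\<omega> \<in> space M. v < S \<omega>} \<omega> \<partial>M)
    = (LBINT x:{v<..}. laplace_rv M \<Theta> x)
      + (\<Sum>k=1..n. v ^ k / fact k * (\<integral>\<omega>. \<Theta> \<omega> ^ (k - 1) * exp (- v * \<Theta> \<omega>) \<partial>M))"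
    (is "_ = ?rhs")
proof -
  have [measurable]: "Z i \<in> borel_measurable M"
    using Z_measurable assms(1) .
  have "of_nat n * (\<integral>\<^sup>+\<omega>. ennreal (Z i \<omega> / \<Theta> \<omega> * indicator {\<omega> \<in> space M. v < S \<omega>} \<omega>) \<partial>M)
      = of_nat n * ennreal ?rhs"
    using nn_integral_share_tail[OF assms(1)] nn_integral_S_tail[OF \<open>0 < v\<close>]
      nn_integral_erlang_survival_div[OF \<Theta>_measurable \<Theta>_pos \<open>0 < v\<close> integrable]
    by simp
  then have "(\<integral>\<^sup>+\<omega>. ennreal (Z i \<omega> / \<Theta> \<omega> * indicator {\<omega> \<in> space M. v < S \<omega>} \<omega>) \<partial>M) = ennreal ?rhs"
    using two_le_n by (simp add: ennreal_mult_cancel_left)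
  moreover have "0 \<le> ?rhs"
    using \<open>0 < v\<close> \<Theta>_pos
    by (intro add_nonneg_nonneg set_integral_laplace_rv_nonneg sum_nonneg mult_nonneg_nonneg
        integral_nonneg_AE AE_I2) auto
  moreover have "AE \<omega> in M. 0 \<le> Z i \<omega> / \<Theta> \<omega> * indicator {\<omega> \<in> space M. v < S \<omega>} \<omega>"
    using Z_nonneg[OF assms(1)] AE_space
    by eventually_elim (use \<Theta>_pos in \<open>auto simp: split: split_indicator\<close>)
  moreover have "(\<lambda>\<omega>. Z i \<omega> / \<Theta> \<omega> * indicator {\<omega> \<in> space M. v < S \<omega>} \<omega>) \<in> borel_measurable M"
    by measurable
  ultimately show ?thesis
    by (subst integral_eq_nn_integral) auto
qed

lemma TVaR_share_eq:
  assumes "i \<in> {1..n}" and "0 < \<kappa>" "\<kappa> < 1"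
    and integrable: "set_integrable lborel {0<..} (laplace_rv M \<Theta>)"
  shows "TVaR M \<kappa> (\<lambda>\<omega>. Z i \<omega> / \<Theta> \<omega>) S =
    1 / (1 - \<kappa>) * (\<Sum>\<nu>=1..n. (-1) ^ (\<nu> + 1) * (VaR M \<kappa> S) ^ \<nu> / fact \<nu> *
         (deriv ^^ (\<nu> - 1)) (laplace_rv M \<Theta>) (VaR M \<kappa> S))
    + 1 / (1 - \<kappa>) * (LBINT x:{VaR M \<kappa> S<..}. laplace_rv M \<Theta> x)"
proof -
  define v where "v = VaR M \<kappa> S"
  have "0 < v"
    unfolding v_def using VaR_S_pos assms(2,3) .
  have derivative_terms: "(\<Sum>\<nu>=1..n. (-1) ^ (\<nu> + 1) * v ^ \<nu> / fact \<nu> * (deriv ^^ (\<nu> - 1)) (laplace_rv M \<Theta>) v)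
      = (\<Sum>\<nu>=1..n. v ^ \<nu> / fact \<nu> * (\<integral>\<omega>. \<Theta> \<omega> ^ (\<nu> - 1) * exp (- v * \<Theta> \<omega>) \<partial>M))"
  proof (rule sum.cong)
    fix \<nu> assume "\<nu> \<in> {1..n}"
    then obtain m where "\<nu> = Suc m"
      by (cases \<nu>) auto
    then have sign: "(-1::real) ^ (\<nu> + 1) * (-1) ^ (\<nu> - 1) = 1"
      by (simp flip: power_mult_distrib)
    have "(-1) ^ (\<nu> + 1) * v ^ \<nu> / fact \<nu> * (deriv ^^ (\<nu> - 1)) (laplace_rv M \<Theta>) v
      = ((-1) ^ (\<nu> + 1) * (-1) ^ (\<nu> - 1)) * (v ^ \<nu> / fact \<nu> * (\<integral>\<omega>. \<Theta> \<omega> ^ (\<nu> - 1) * exp (- v * \<Theta> \<omega>) \<partial>M))"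
      unfolding higher_deriv_laplace_rv[OF \<Theta>_measurable \<Theta>_pos \<open>0 < v\<close>]
      by (simp only: mult_ac divide_inverse)
    then show "(-1) ^ (\<nu> + 1) * v ^ \<nu> / fact \<nu> * (deriv ^^ (\<nu> - 1)) (laplace_rv M \<Theta>) v
      = v ^ \<nu> / fact \<nu> * (\<integral>\<omega>. \<Theta> \<omega> ^ (\<nu> - 1) * exp (- v * \<Theta> \<omega>) \<partial>M)"
      unfolding sign by simp
  qed simp
  have "TVaR M \<kappa> (\<lambda>\<omega>. Z i \<omega> / \<Theta> \<omega>) S
      = (\<integral>\<omega>. Z i \<omega> / \<Theta> \<omega> * indicator {\<omega> \<in> space M. v < S \<omega>} \<omega> \<partial>M) / (1 - \<kappa>)"
    using prob_VaR_less_S[OF assms(2,3)] unfolding TVaR_def Let_def v_def by simp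
  then show ?thesis
    unfolding v_def[symmetric] derivative_terms integral_share_tail[OF assms(1) \<open>0 < v\<close> integrable]
    by (simp add: add_divide_distrib)
qed

end

theorem corollary4:
  fixes M :: "'a measure" and \<Theta> :: "'a \<Rightarrow> real" and Z :: "nat \<Rightarrow> 'a \<Rightarrow> real"
    and n :: nat and \<kappa> :: real and i :: nat
  assumes "prob_space M"
    and "n \<ge> 2"
    and "\<exists>f. distributed M lborel \<Theta> f"
    and "\<forall>\<omega>\<in>space M. \<Theta> \<omega> > 0"
    and "set_integrable lborel {0<..} (laplace_rv M \<Theta>)"
    and "\<forall>j\<in>{1..n}. distributed M lborel (Z j) (exponential_density 1)"
    and "prob_space.indep_vars M (\<lambda>_. borel) (\<lambda>j. if j = 0 then \<Theta> else Z j) {0..n}"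
    and "0 < \<kappa>" and "\<kappa> < 1"
    and "i \<in> {1..n}"
  shows "TVaR M \<kappa> (\<lambda>\<omega>. Z i \<omega> / \<Theta> \<omega>) (\<lambda>\<omega>. \<Sum>j=1..n. Z j \<omega> / \<Theta> \<omega>) =
    1 / (1 - \<kappa>) * (\<Sum>\<nu>=1..n. (-1) ^ (\<nu> + 1) *
         (VaR M \<kappa> (\<lambda>\<omega>. \<Sum>j=1..n. Z j \<omega> / \<Theta> \<omega>)) ^ \<nu> / fact \<nu> *
         (deriv ^^ (\<nu> - 1)) (laplace_rv M \<Theta>) (VaR M \<kappa> (\<lambda>\<omega>. \<Sum>j=1..n. Z j \<omega> / \<Theta> \<omega>)))
    + 1 / (1 - \<kappa>) * (LBINT x:{VaR M \<kappa> (\<lambda>\<omega>. \<Sum>j=1..n. Z j \<omega> / \<Theta> \<omega>)<..}. laplace_rv M \<Theta> x)"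
proof -
  interpret prob_space M by fact
  obtain f where "distributed M lborel \<Theta> f"
    using assms(3) by blast
  then interpret exponential_mixture M \<Theta> Z n
    using assms by unfold_locales (auto dest: distributed_measurable)
  show ?thesis
    using assms by (intro TVaR_share_eq) auto
qed

end
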